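(* Let $A\in\mathbb{R}^{n\times n}$, $B\in\mathbb{R}^{n\times m}$, $C\in\mathbb{R}^{p\times n}$ with $(A,C)$ observable, $\ell$ its observability index, and $\mathbf{F}_\ell,\mathbf{L}_\ell,\mathbf{B}_\ell,Z_\ell,\mathbf{A}_\ell$ as in the context. If $\mathbf{K}\in\mathbb{R}^{m\times(p\ell+m\ell)}$ is such that $\mathbf{A}_\ell+\mathbf{B}_\ell\mathbf{K}=\mathbf{F}_\ell+\mathbf{L}_\ell Z_\ell+\mathbf{B}_\ell\mathbf{K}$ is Schur, then $(x,\chi)=0$ is globally asymptotically stable for the system $x^+=Ax+Bu$, $y=Cx$, $\chi^+=\mathbf{F}_\ell\chi+\mathbf{L}_\ell y+\mathbf{B}_\ell u$, $u=\mathbf{K}\chi$.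
   Context: A square matrix is Schur if all its eigenvalues lie in the open unit disk. The observability index $\ell$ is the smallest $l$ with $\operatorname{rank}[C;CA;\dots;CA^{l-1}]=n$. $\mathcal{O}_\ell=[C;CA;\dots;CA^{\ell-1}]$; $\mathcal{T}_\ell\in\mathbb{R}^{p\ell\times m\ell}$ block lower triangular with $(i,j)$ block $CA^{i-j-1}B$ if $i>j$ and $0$ otherwise; $\mathcal{R}_\ell=[A^{\ell-1}B\ \cdots\ AB\ B]$; $\mathcal{O}_\ell^{L}$ a fixed left inverse of $\mathcal{O}_\ell$. $\mathbf{F}_\ell=\mathrm{blockdiag}(S_p,S_m)$, $S_q\in\mathbb{R}^{q\ell\times q\ell}$ with blocks $I_q$ at block positions $(i,i+1)$, $i=1,\dots,\ell-1$, zeros elsewhere; $\mathbf{L}_\ell\in\mathbb{R}^{(p\ell+m\ell)\times p}$ with $I_p$ in rows $p\ell-p+1,\dots,p\ell$, zeros elsewhere; $\mathbf{B}_\ell\in\mathbb{R}^{(p\ell+m\ell)\times m}$ with $I_m$ in its last $m$ rows, zeros elsewhere. $Z_\ell=[CA^\ell\mathcal{O}_\ell^L\ \ C\mathcal{R}_\ell-CA^\ell\mathcal{O}_\ell^L\mathcal{T}_\ell]$, $\mathbf{A}_\ell=\mathbf{F}_\ell+\mathbf{L}_\ell Z_\ell$. *)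

theory Defs
  imports "Jordan_Normal_Form.Matrix" "Jordan_Normal_Form.Char_Poly" "Jordan_Normal_Form.DL_Rank"
begin

text \<open>Observability matrix O_l = [C; CA; ...; CA^(l-1)], size (p*l) x n.\<close>
definition obs_mat :: "nat \<Rightarrow> real mat \<Rightarrow> real mat \<Rightarrow> nat \<Rightarrow> real mat" where
  "obs_mat p A C l = mat (p * l) (dim_col A)
     (\<lambda>(i, j). (C * A ^\<^sub>m (i div p)) $$ (i mod p, j))"

definition mrank :: "real mat \<Rightarrow> nat" where
  "mrank M = vec_space.rank (dim_row M) M"

definition observable :: "nat \<Rightarrow> real mat \<Rightarrow> real mat \<Rightarrow> bool" where
  "observable p A C = (mrank (obs_mat p A C (dim_col A)) = dim_col A)"

definition obs_index :: "nat \<Rightarrow> real mat \<Rightarrow> real mat \<Rightarrow> nat" where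
  "obs_index p A C = (LEAST l. mrank (obs_mat p A C l) = dim_col A)"

text \<open>Block lower triangular Toeplitz T_l, size (p*l) x (m*l): block (i,j) = C A^(i-j-1) B if i > j.\<close>
definition toep_mat :: "nat \<Rightarrow> nat \<Rightarrow> real mat \<Rightarrow> real mat \<Rightarrow> real mat \<Rightarrow> nat \<Rightarrow> real mat" where
  "toep_mat p m A B C l = mat (p * l) (m * l)
     (\<lambda>(i, j). if j div m < i div p
               then (C * A ^\<^sub>m (i div p - j div m - 1) * B) $$ (i mod p, j mod m)
               else 0)"

text \<open>R_l = [A^(l-1) B ... A B  B], size n x (m*l).\<close>
definition reach_mat :: "nat \<Rightarrow> real mat \<Rightarrow> real mat \<Rightarrow> nat \<Rightarrow> real mat" where
  "reach_mat m A B l = mat (dim_row A) (m * l)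
     (\<lambda>(i, j). (A ^\<^sub>m (l - 1 - j div m) * B) $$ (i, j mod m))"

definition shift_mat :: "nat \<Rightarrow> nat \<Rightarrow> real mat" where
  "shift_mat q l = mat (q * l) (q * l) (\<lambda>(i, j). if j = i + q then 1 else 0)"

definition F_mat :: "nat \<Rightarrow> nat \<Rightarrow> nat \<Rightarrow> real mat" where
  "F_mat p m l = four_block_mat (shift_mat p l) (0\<^sub>m (p * l) (m * l))
                                (0\<^sub>m (m * l) (p * l)) (shift_mat m l)"

text \<open>L_l: I_p in rows p*l-p+1..p*l (1-based), size (p*l+m*l) x p.\<close>
definition L_mat :: "nat \<Rightarrow> nat \<Rightarrow> nat \<Rightarrow> real mat" where
  "L_mat p m l = mat (p * l + m * l) p (\<lambda>(i, j). if i + p = p * l + j then 1 else 0)"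

definition Bl_mat :: "nat \<Rightarrow> nat \<Rightarrow> nat \<Rightarrow> real mat" where
  "Bl_mat p m l = mat (p * l + m * l) m (\<lambda>(i, j). if i + m = p * l + m * l + j then 1 else 0)"

definition Z_mat :: "nat \<Rightarrow> nat \<Rightarrow> real mat \<Rightarrow> real mat \<Rightarrow> real mat \<Rightarrow> real mat \<Rightarrow> nat \<Rightarrow> real mat" where
  "Z_mat p m A B C OL l = four_block_mat
     (C * A ^\<^sub>m l * OL)
     (C * reach_mat m A B l - C * A ^\<^sub>m l * OL * toep_mat p m A B C l)
     (0\<^sub>m 0 (p * l)) (0\<^sub>m 0 (m * l))"

definition schur :: "real mat \<Rightarrow> bool" where
  "schur M = (\<forall>k::complex. eigenvalue (map_mat complex_of_real M) k \<longrightarrow> cmod k < 1)"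

definition vnorm :: "real vec \<Rightarrow> real" where
  "vnorm v = sqrt (\<Sum>i<dim_vec v. (v $ i)^2)"

text \<open>Global asymptotic stability of the origin for x(k+1) = f(x(k)) on state set S
  (the origin 0 \<in> S being an equilibrium is part of the statement to be proved).\<close>
definition gas :: "('s \<Rightarrow> 's) \<Rightarrow> 's set \<Rightarrow> ('s \<Rightarrow> real) \<Rightarrow> 's \<Rightarrow> bool" where
  "gas f S nrm z0 =
     (z0 \<in> S \<and> f z0 = z0 \<and>
      (\<forall>\<epsilon>>0. \<exists>\<delta>>0. \<forall>z\<in>S. nrm z < \<delta> \<longrightarrow> (\<forall>k. nrm ((f ^^ k) z) < \<epsilon>)) \<and>
      (\<forall>z\<in>S. (\<lambda>k. nrm ((f ^^ k) z)) \<longlonglongrightarrow> 0))"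

definition closed_loop ::
  "real mat \<Rightarrow> real mat \<Rightarrow> real mat \<Rightarrow> real mat \<Rightarrow> real mat \<Rightarrow> real mat \<Rightarrow> real mat
   \<Rightarrow> real vec \<times> real vec \<Rightarrow> real vec \<times> real vec" where
  "closed_loop A B C F L Bl K = (\<lambda>(x, \<chi>).
     (let y = C *\<^sub>v x; u = K *\<^sub>v \<chi> in
      (A *\<^sub>v x + B *\<^sub>v u, F *\<^sub>v \<chi> + L *\<^sub>v y + Bl *\<^sub>v u)))"

definition pair_norm :: "real vec \<times> real vec \<Rightarrow> real" where
  "pair_norm z = sqrt ((vnorm (fst z))^2 + (vnorm (snd z))^2)"

end

theory Submission
  imports Defs "HOL-Analysis.L2_Norm" "Jordan_Normal_Form.Spectral_Radius"
begin

(* After l steps the observer state chi_k holds exactly the last l outputs and inputs. On such a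
   window the outputs satisfy Y = O_l x + T_l U, so the left inverse O^L recovers the plant state
   as x_k = [A^l O^L, R_l - A^l O^L T_l] chi_k; consequently y_k = Z_l chi_k, and from time l on
   the observer evolves autonomously by the Schur matrix F_l + L_l Z_l + B_l K. Hence chi_k, and
   with it x_k, decays exponentially after time l, while during the first l steps the linear closed
   loop grows at most geometrically. Uniform bounds of this kind give both Lyapunov stability and
   attractivity. *)

section \<open>Euclidean norms of vectors\<close>

lemma vnorm_eq_L2_set: "vnorm v = L2_set (\<lambda>i. v $ i) {..<dim_vec v}"
  by (simp add: vnorm_def L2_set_def)

lemma vnorm_nonneg: "0 \<le> vnorm v"
  by (simp add: vnorm_eq_L2_set)

lemma abs_index_le_vnorm: "i < dim_vec v \<Longrightarrow> \<bar>v $ i\<bar> \<le> vnorm v"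
  unfolding vnorm_eq_L2_set
  using member_le_L2_set[of "{..<dim_vec v}" i "\<lambda>i. \<bar>v $ i\<bar>"]
  by (simp add: L2_set_def)

lemma vnorm_add_le:
  assumes "v \<in> carrier_vec n" "w \<in> carrier_vec n"
  shows "vnorm (v + w) \<le> vnorm v + vnorm w"
proof -
  have "vnorm (v + w) = L2_set (\<lambda>i. v $ i + w $ i) {..<n}"
    using assms by (auto simp: vnorm_eq_L2_set intro: L2_set_cong)
  then show ?thesis
    using assms L2_set_triangle_ineq[of "\<lambda>i. v $ i" "\<lambda>i. w $ i" "{..<n}"]
    by (simp add: vnorm_eq_L2_set)
qed

definition abs_entry_sum :: "real mat \<Rightarrow> real" where
  "abs_entry_sum M = (\<Sum>i<dim_row M. \<Sum>j<dim_col M. \<bar>M $$ (i, j)\<bar>)"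

lemma abs_entry_sum_nonneg: "0 \<le> abs_entry_sum M"
  by (simp add: abs_entry_sum_def sum_nonneg)

lemma vnorm_mult_mat_vec_le:
  assumes v: "v \<in> carrier_vec (dim_col M)"
  shows "vnorm (M *\<^sub>v v) \<le> abs_entry_sum M * vnorm v"
proof -
  have "\<bar>(M *\<^sub>v v) $ i\<bar> \<le> (\<Sum>j<dim_col M. \<bar>M $$ (i, j)\<bar>) * vnorm v" if i: "i < dim_row M" for i
  proof -
    have "\<bar>(M *\<^sub>v v) $ i\<bar> = \<bar>\<Sum>j<dim_col M. M $$ (i, j) * v $ j\<bar>"
      using v i by (simp add: scalar_prod_def atLeast0LessThan)
    also have "\<dots> \<le> (\<Sum>j<dim_col M. \<bar>M $$ (i, j)\<bar> * vnorm v)"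
      using v by (auto intro!: order_trans[OF sum_abs] sum_mono mult_left_mono abs_index_le_vnorm
          simp: abs_mult)
    finally show ?thesis by (simp add: sum_distrib_right)
  qed
  then have "(\<Sum>i<dim_row M. \<bar>(M *\<^sub>v v) $ i\<bar>) \<le> abs_entry_sum M * vnorm v"
    by (auto intro: sum_mono simp: abs_entry_sum_def sum_distrib_right)
  moreover have "vnorm (M *\<^sub>v v) \<le> (\<Sum>i<dim_row M. \<bar>(M *\<^sub>v v) $ i\<bar>)"
    using L2_set_le_sum_abs[of "\<lambda>i. (M *\<^sub>v v) $ i" "{..<dim_row M}"]
    by (simp add: vnorm_eq_L2_set)
  ultimately show ?thesis by linarith
qed

lemma vnorm_fst_le_pair_norm: "vnorm (fst z) \<le> pair_norm z"
  unfolding pair_norm_def by (rule real_sqrt_sum_squares_ge1)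

lemma vnorm_snd_le_pair_norm: "vnorm (snd z) \<le> pair_norm z"
  unfolding pair_norm_def by (rule real_sqrt_sum_squares_ge2)

lemma pair_norm_le_add: "pair_norm z \<le> vnorm (fst z) + vnorm (snd z)"
  using sqrt_sum_squares_le_sum_abs[of "vnorm (fst z)" "vnorm (snd z)"]
  by (simp add: pair_norm_def vnorm_nonneg)

lemma pair_norm_nonneg: "0 \<le> pair_norm z"
  by (simp add: pair_norm_def)

section \<open>Stability from an exponential tail bound\<close>

lemma funpow_growth_bound:
  fixes f :: "'s \<Rightarrow> 's" and nrm :: "'s \<Rightarrow> real"
  assumes closed: "\<And>z. z \<in> S \<Longrightarrow> f z \<in> S" and nonneg: "\<And>z. 0 \<le> nrm z"
    and step: "\<And>z. z \<in> S \<Longrightarrow> nrm (f z) \<le> c * nrm z" and z: "z \<in> S"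
  shows "nrm ((f ^^ k) z) \<le> max c 0 ^ k * nrm z"
proof (induction k)
  case (Suc k)
  have "(f ^^ k) z \<in> S"
    by (induction k) (simp_all add: closed z)
  then have "nrm ((f ^^ Suc k) z) \<le> c * nrm ((f ^^ k) z)"
    using step by simp
  also have "\<dots> \<le> max c 0 * nrm ((f ^^ k) z)"
    by (intro mult_right_mono nonneg) simp
  also have "\<dots> \<le> max c 0 * (max c 0 ^ k * nrm z)"
    using Suc.IH by (rule mult_left_mono) simp
  finally show ?case by (simp add: mult.assoc)
qed simp

lemma funpow_uniform_bound:
  fixes f :: "'s \<Rightarrow> 's" and nrm :: "'s \<Rightarrow> real"
  assumes closed: "\<And>z. z \<in> S \<Longrightarrow> f z \<in> S" and nonneg: "\<And>z. 0 \<le> nrm z"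
    and step: "\<And>z. z \<in> S \<Longrightarrow> nrm (f z) \<le> c * nrm z"
    and tail: "\<And>z k. z \<in> S \<Longrightarrow> nrm ((f ^^ (k + l)) z) \<le> D * r ^ k * nrm ((f ^^ l) z)"
    and r: "0 \<le> r" "r \<le> 1"
  obtains E where "1 \<le> E" "\<And>z k. z \<in> S \<Longrightarrow> nrm ((f ^^ k) z) \<le> E * nrm z"
proof -
  define c' where "c' = max c 0"
  have growth: "nrm ((f ^^ k) z) \<le> c' ^ k * nrm z" if "z \<in> S" for z k
    unfolding c'_def using closed nonneg step that by (rule funpow_growth_bound)
  define E where "E = (1 + max D 0) * max 1 c' ^ l"
  have "max 1 c' ^ l \<le> E"
    unfolding E_def by (rule mult_le_cancel_right1[THEN iffD2]) auto
  have "nrm ((f ^^ k) z) \<le> E * nrm z" if z: "z \<in> S" for z k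
  proof (cases "k < l")
    case True
    have "c' ^ k \<le> max 1 c' ^ l"
      using True by (intro order_trans[OF power_mono power_increasing]) (auto simp: c'_def)
    then have "c' ^ k * nrm z \<le> E * nrm z"
      using \<open>max 1 c' ^ l \<le> E\<close> by (intro mult_right_mono[OF _ nonneg]) simp
    then show ?thesis
      using growth[OF z, of k] by linarith
  next
    case False
    then obtain j where k: "k = j + l" by (metis add.commute le_add_diff_inverse not_less)
    have "nrm ((f ^^ k) z) \<le> D * r ^ j * nrm ((f ^^ l) z)"
      unfolding k by (rule tail[OF z])
    also have "\<dots> \<le> max D 0 * 1 * nrm ((f ^^ l) z)"
      using r by (intro mult_right_mono[OF mult_mono] nonneg power_le_one) auto
    also have "\<dots> \<le> max D 0 * (c' ^ l * nrm z)"
      using mult_left_mono[OF growth[OF z, of l], of "max D 0"] by simp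
    also have "\<dots> \<le> E * nrm z"
    proof -
      have "max D 0 * c' ^ l \<le> (1 + max D 0) * max 1 c' ^ l"
        by (intro mult_mono power_mono) (auto simp: c'_def)
      then show ?thesis
        unfolding E_def mult.assoc[symmetric] by (rule mult_right_mono[OF _ nonneg])
    qed
    finally show ?thesis .
  qed
  moreover have "1 \<le> E"
    using \<open>max 1 c' ^ l \<le> E\<close> one_le_power[of "max 1 c'" l] by linarith
  ultimately show thesis
    using that by blast
qed

lemma gas_if_exponential_tail:
  fixes f :: "'s \<Rightarrow> 's" and nrm :: "'s \<Rightarrow> real"
  assumes "z0 \<in> S" "f z0 = z0" and closed: "\<And>z. z \<in> S \<Longrightarrow> f z \<in> S"
    and nonneg: "\<And>z. 0 \<le> nrm z"
    and step: "\<And>z. z \<in> S \<Longrightarrow> nrm (f z) \<le> c * nrm z"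
    and tail: "\<And>z k. z \<in> S \<Longrightarrow> nrm ((f ^^ (k + l)) z) \<le> D * r ^ k * nrm ((f ^^ l) z)"
    and r: "0 \<le> r" "r < 1"
  shows "gas f S nrm z0"
proof -
  obtain E where "1 \<le> E" and bounded: "\<And>z k. z \<in> S \<Longrightarrow> nrm ((f ^^ k) z) \<le> E * nrm z"
    using funpow_uniform_bound[OF closed nonneg step tail] r by (metis less_imp_le)
  show ?thesis
    unfolding gas_def
  proof (intro conjI allI impI ballI assms(1,2))
    fix \<epsilon> :: real assume "0 < \<epsilon>"
    show "\<exists>\<delta>>0. \<forall>z\<in>S. nrm z < \<delta> \<longrightarrow> (\<forall>k. nrm ((f ^^ k) z) < \<epsilon>)"
    proof (intro exI[of _ "\<epsilon> / E"] conjI ballI impI allI)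
      show "0 < \<epsilon> / E" using \<open>0 < \<epsilon>\<close> \<open>1 \<le> E\<close> by simp
      fix z k assume "z \<in> S" "nrm z < \<epsilon> / E"
      then have "E * nrm z < \<epsilon>"
        using \<open>1 \<le> E\<close> by (simp add: pos_less_divide_eq mult.commute)
      then show "nrm ((f ^^ k) z) < \<epsilon>"
        using bounded[OF \<open>z \<in> S\<close>, of k] by linarith
    qed
  next
    fix z assume z: "z \<in> S"
    have majorant: "(\<lambda>k. D * r ^ k * nrm ((f ^^ l) z)) \<longlonglongrightarrow> 0"
      using r by (intro tendsto_mult_left_zero tendsto_mult_right_zero LIMSEQ_power_zero) simp
    have "(\<lambda>k. nrm ((f ^^ (k + l)) z)) \<longlonglongrightarrow> 0"
      by (rule tendsto_sandwich[OF _ _ tendsto_const majorant])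
        (simp_all add: nonneg tail[OF z])
    then show "(\<lambda>k. nrm ((f ^^ k) z)) \<longlonglongrightarrow> 0"
      by (rule LIMSEQ_offset)
  qed
qed

section \<open>Powers of Schur matrices\<close>

lemma smult_pow_mat:
  assumes "A \<in> carrier_mat n n"
  shows "(a \<cdot>\<^sub>m A) ^\<^sub>m k = a ^ k \<cdot>\<^sub>m (A ^\<^sub>m k :: 'a :: comm_ring_1 mat)"
proof (induction k)
  case (Suc k)
  have "(a \<cdot>\<^sub>m A) ^\<^sub>m Suc k = (a ^ k \<cdot>\<^sub>m A ^\<^sub>m k) * (a \<cdot>\<^sub>m A)"
    using Suc by simp
  also have "\<dots> = a ^ Suc k \<cdot>\<^sub>m (A ^\<^sub>m k * A)"
    using assms by (simp add: mult_smult_assoc_mat[of _ n n] mult_smult_distrib[of _ n n])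
      (rule eq_matI, auto simp: ac_simps)
  finally show ?case by simp
qed (use assms in \<open>auto intro!: eq_matI\<close>)

lemma smult_mat_mult_vec:
  "v \<in> carrier_vec (dim_col A) \<Longrightarrow> (a \<cdot>\<^sub>m A) *\<^sub>v v = a \<cdot>\<^sub>v (A *\<^sub>v (v :: 'a :: comm_ring_1 vec))"
  by (intro eq_vecI) (auto simp: scalar_prod_def sum_distrib_left ac_simps)

lemma eigenvalue_smult_mat:
  fixes A :: "'a :: field mat"
  assumes "A \<in> carrier_mat n n" "eigenvalue (a \<cdot>\<^sub>m A) e" and "a \<noteq> 0"
  shows "eigenvalue A (e / a)"
proof -
  obtain v where v: "v \<in> carrier_vec (dim_row A)" "v \<noteq> 0\<^sub>v (dim_row A)"
    and "(a \<cdot>\<^sub>m A) *\<^sub>v v = e \<cdot>\<^sub>v v"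
    using assms(2) unfolding eigenvalue_def eigenvector_def by auto
  then have "a \<cdot>\<^sub>v (A *\<^sub>v v) = e \<cdot>\<^sub>v v"
    using assms(1) by (simp add: smult_mat_mult_vec)
  then have "A *\<^sub>v v = (1 / a) \<cdot>\<^sub>v (e \<cdot>\<^sub>v v)"
    using \<open>a \<noteq> 0\<close> by (metis smult_smult_assoc one_smult_vec nonzero_divide_eq_eq)
  then have "A *\<^sub>v v = (e / a) \<cdot>\<^sub>v v"
    by (simp add: smult_smult_assoc)
  then show ?thesis
    using v unfolding eigenvalue_def eigenvector_def by auto
qed

lemma spectral_radius_smult_less_1:
  assumes A: "A \<in> carrier_mat n n" and "0 < n" and "spectral_radius A < r"
  shows "spectral_radius (complex_of_real (1 / r) \<cdot>\<^sub>m A) < 1"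
proof -
  have "0 < r"
    using spectral_radius_mem_max(1)[OF A \<open>0 < n\<close>] assms(3) norm_ge_zero
    by (metis image_iff le_less_trans)
  have "cmod e < 1" if "e \<in> spectrum (complex_of_real (1 / r) \<cdot>\<^sub>m A)" for e
  proof -
    have "eigenvalue A (e * complex_of_real r)"
      using eigenvalue_smult_mat[OF A, of "complex_of_real (1 / r)" e] that \<open>0 < r\<close>
      unfolding spectrum_def by auto
    then have "cmod (e * complex_of_real r) \<le> spectral_radius A"
      using spectral_radius_mem_max(2)[OF A \<open>0 < n\<close>] unfolding spectrum_def by blast
    then have "r * cmod e \<le> spectral_radius A"
      using \<open>0 < r\<close> by (simp add: norm_mult mult.commute)
    then show ?thesis
      using \<open>0 < r\<close> assms(3) by (metis mult.right_neutral mult_less_cancel_left_pos order.strict_trans1)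
  qed
  moreover have "spectral_radius (complex_of_real (1 / r) \<cdot>\<^sub>m A)
      \<in> cmod ` spectrum (complex_of_real (1 / r) \<cdot>\<^sub>m A)"
    using A \<open>0 < n\<close> by (intro spectral_radius_mem_max(1)) auto
  ultimately show ?thesis by auto
qed

lemma schur_pow_mat_entries_decay:
  assumes M: "M \<in> carrier_mat N N" and "schur M"
  obtains c r where "0 < r" "r < 1"
    "\<And>k i j. i < N \<Longrightarrow> j < N \<Longrightarrow> \<bar>(M ^\<^sub>m k) $$ (i, j)\<bar> \<le> c * r ^ k"
proof (cases "N = 0")
  case True
  then show ?thesis by (intro that[of "1/2" 0]) auto
next
  case False
  define Mc where "Mc = map_mat complex_of_real M"
  have Mc: "Mc \<in> carrier_mat N N" using M by (simp add: Mc_def)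
  define r where "r = (1 + spectral_radius Mc) / 2"
  have "spectral_radius Mc < 1" "0 \<le> spectral_radius Mc"
    using spectral_radius_mem_max(1)[OF Mc] False \<open>schur M\<close>
    unfolding schur_def spectrum_def Mc_def by auto
  then have r: "0 < r" "r < 1" "spectral_radius Mc < r" by (auto simp: r_def)
  \<comment> \<open>The powers of the rescaled matrix \<open>Mc / r\<close> are bounded, so those of \<open>M\<close> decay like \<open>r ^ k\<close>.\<close>
  have "complex_of_real (1 / r) \<cdot>\<^sub>m Mc \<in> carrier_mat N N" using Mc by simp
  moreover have "spectral_radius (complex_of_real (1 / r) \<cdot>\<^sub>m Mc) < 1"
    using spectral_radius_smult_less_1[OF Mc] False r(3) by simp
  ultimately obtain c where c: "\<And>k. norm_bound ((complex_of_real (1 / r) \<cdot>\<^sub>m Mc) ^\<^sub>m k) c"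
    using spectral_radius_jnf_norm_bound_less_1_upper_triangular by blast
  show ?thesis
  proof (rule that[OF r(1,2)])
    fix k i j assume ij: "i < N" "j < N"
    have "(complex_of_real (1 / r) \<cdot>\<^sub>m Mc) ^\<^sub>m k = complex_of_real (1 / r) ^ k \<cdot>\<^sub>m Mc ^\<^sub>m k"
      by (rule smult_pow_mat[OF Mc])
    also have "Mc ^\<^sub>m k = map_mat complex_of_real (M ^\<^sub>m k)"
      unfolding Mc_def by (rule of_real_hom.mat_hom_pow[OF M, symmetric])
    finally have "(complex_of_real (1 / r) \<cdot>\<^sub>m Mc) ^\<^sub>m k =
        complex_of_real (1 / r) ^ k \<cdot>\<^sub>m map_mat complex_of_real (M ^\<^sub>m k)" .
    then have "(1 / r) ^ k * \<bar>(M ^\<^sub>m k) $$ (i, j)\<bar> \<le> c"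
      using c[of k] ij M r unfolding norm_bound_def
      by (auto simp: norm_mult norm_power norm_divide carrier_matD)
    then show "\<bar>(M ^\<^sub>m k) $$ (i, j)\<bar> \<le> c * r ^ k"
      using r by (simp add: power_one_over field_simps)
  qed
qed

lemma schur_pow_mat_mult_vec_decay:
  assumes M: "M \<in> carrier_mat N N" and "schur M"
  obtains c r where "0 \<le> c" "0 < r" "r < 1"
    "\<And>k v. v \<in> carrier_vec N \<Longrightarrow> vnorm (M ^\<^sub>m k *\<^sub>v v) \<le> c * r ^ k * vnorm v"
proof -
  obtain c r where r: "0 < r" "r < 1"
    and c: "\<And>k i j. i < N \<Longrightarrow> j < N \<Longrightarrow> \<bar>(M ^\<^sub>m k) $$ (i, j)\<bar> \<le> c * r ^ k"
    using schur_pow_mat_entries_decay[OF assms] by metis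
  define c' where "c' = max c 0"
  have c': "\<bar>(M ^\<^sub>m k) $$ (i, j)\<bar> \<le> c' * r ^ k" if "i < N" "j < N" for k i j
  proof -
    have "c * r ^ k \<le> c' * r ^ k" using r by (intro mult_right_mono) (auto simp: c'_def)
    then show ?thesis using c[OF that, of k] by linarith
  qed
  show thesis
  proof (rule that[of "real N * real N * c'"])
    fix k and v :: "real vec" assume v: "v \<in> carrier_vec N"
    have "(\<Sum>j<N. \<bar>(M ^\<^sub>m k) $$ (i, j)\<bar>) \<le> real N * (c' * r ^ k)" if "i < N" for i
      using sum_bounded_above[of "{..<N}" "\<lambda>j. \<bar>(M ^\<^sub>m k) $$ (i, j)\<bar>" "c' * r ^ k"] c' that
      by simp
    then have "abs_entry_sum (M ^\<^sub>m k) \<le> real N * real N * c' * r ^ k"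
      using sum_bounded_above[of "{..<N}" _ "real N * (c' * r ^ k)"]
      unfolding abs_entry_sum_def carrier_matD[OF pow_carrier_mat[OF M]] by (simp add: ac_simps)
    then have "abs_entry_sum (M ^\<^sub>m k) * vnorm v \<le> real N * real N * c' * r ^ k * vnorm v"
      by (rule mult_right_mono[OF _ vnorm_nonneg])
    moreover have "vnorm (M ^\<^sub>m k *\<^sub>v v) \<le> abs_entry_sum (M ^\<^sub>m k) * vnorm v"
      using M v by (intro vnorm_mult_mat_vec_le) simp
    ultimately show "vnorm (M ^\<^sub>m k *\<^sub>v v) \<le> real N * real N * c' * r ^ k * vnorm v"
      by linarith
  qed (use r in \<open>auto simp: c'_def\<close>)
qed

section \<open>The lifted system over a window of length l\<close>

(* window q w s i stacks the q-vectors w s, ..., w (s + i - 1) into a single vector. *)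
definition window :: "nat \<Rightarrow> (nat \<Rightarrow> 'a vec) \<Rightarrow> nat \<Rightarrow> nat \<Rightarrow> 'a vec" where
  "window q w s i = vec (q * i) (\<lambda>r. w (s + r div q) $ (r mod q))"

lemma window_carrier [simp]: "window q w s i \<in> carrier_vec (q * i)"
  and dim_window [simp]: "dim_vec (window q w s i) = q * i"
  by (simp_all add: window_def)

lemma div_mod_last_block:
  fixes q i r :: nat
  assumes "q * i \<le> r" "r < q * i + q"
  shows "r div q = i" "r mod q = r - q * i"
proof -
  show "r div q = i" using assms by (intro div_nat_eqI) (auto simp: algebra_simps)
  then show "r mod q = r - q * i" by (metis minus_div_mult_eq_mod mult.commute)
qed

lemma window_Suc:
  assumes "w (s + i) \<in> carrier_vec q"
  shows "window q w s (Suc i) = window q w s i @\<^sub>v w (s + i)"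
proof (rule eq_vecI)
  fix r assume "r < dim_vec (window q w s i @\<^sub>v w (s + i))"
  then have r: "r < q * i + q" using assms by simp
  show "window q w s (Suc i) $ r = (window q w s i @\<^sub>v w (s + i)) $ r"
  proof (cases "r < q * i")
    case False
    then show ?thesis
      using r assms div_mod_last_block[of q i r] by (simp add: window_def)
  qed (use r in \<open>simp add: window_def\<close>)
qed (use assms in simp)

lemma dim_reach_mat [simp]:
  "dim_row (reach_mat m A B i) = dim_row A" "dim_col (reach_mat m A B i) = m * i"
  and dim_obs_mat [simp]:
  "dim_row (obs_mat p A C i) = p * i" "dim_col (obs_mat p A C i) = dim_col A"
  and dim_toep_mat [simp]:
  "dim_row (toep_mat p m A B C i) = p * i" "dim_col (toep_mat p m A B C i) = m * i"
  by (simp_all add: reach_mat_def obs_mat_def toep_mat_def)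

lemma reach_mat_carrier [simp]: "A \<in> carrier_mat n n \<Longrightarrow> reach_mat m A B i \<in> carrier_mat n (m * i)"
  and obs_mat_carrier [simp]: "A \<in> carrier_mat n n \<Longrightarrow> obs_mat p A C i \<in> carrier_mat (p * i) n"
  and toep_mat_carrier [simp]: "toep_mat p m A B C i \<in> carrier_mat (p * i) (m * i)"
  by (intro carrier_matI; simp add: carrier_matD)+

lemma reach_mat_index:
  "a < dim_row A \<Longrightarrow> c < m * i \<Longrightarrow>
    reach_mat m A B i $$ (a, c) = (A ^\<^sub>m (i - 1 - c div m) * B) $$ (a, c mod m)"
  by (simp add: reach_mat_def del: index_mult_mat)

lemma obs_mat_index:
  "r < p * i \<Longrightarrow> j < dim_col A \<Longrightarrow> obs_mat p A C i $$ (r, j) = (C * A ^\<^sub>m (r div p)) $$ (r mod p, j)"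
  by (simp add: obs_mat_def del: index_mult_mat)

lemma toep_mat_index:
  "r < p * i \<Longrightarrow> c < m * i \<Longrightarrow> toep_mat p m A B C i $$ (r, c) =
    (if c div m < r div p then (C * A ^\<^sub>m (r div p - c div m - 1) * B) $$ (r mod p, c mod m) else 0)"
  by (simp add: toep_mat_def del: index_mult_mat)

lemma pow_mat_Suc_left:
  assumes "A \<in> carrier_mat n n"
  shows "A ^\<^sub>m Suc k = A * A ^\<^sub>m k"
proof (induction k)
  case (Suc k)
  have "A ^\<^sub>m Suc (Suc k) = (A * A ^\<^sub>m k) * A" using Suc by simp
  also have "\<dots> = A * (A ^\<^sub>m k * A)" using assms by (intro assoc_mult_mat) auto
  finally show ?case by simp
qed (use assms in simp)

lemma mult_reach_mat_index:
  assumes "M \<in> carrier_mat k n" "A \<in> carrier_mat n n" "B \<in> carrier_mat n m"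
    and "a < k" "c < m * i"
  shows "(M * reach_mat m A B i) $$ (a, c) = (M * A ^\<^sub>m (i - 1 - c div m) * B) $$ (a, c mod m)"
proof -
  have "m > 0" using assms(5) by (cases m) auto
  then have "col (reach_mat m A B i) c = col (A ^\<^sub>m (i - 1 - c div m) * B) (c mod m)"
    using assms by (auto intro!: eq_vecI simp: reach_mat_def)
  then show ?thesis
    using assms \<open>m > 0\<close> by (simp add: reach_mat_def assoc_mult_mat[of M k n _ n _ m])
qed

lemma reach_mat_Suc:
  assumes A: "A \<in> carrier_mat n n" and B: "B \<in> carrier_mat n m"
  shows "reach_mat m A B (Suc i) = four_block_mat (A * reach_mat m A B i) B (0\<^sub>m 0 (m * i)) (0\<^sub>m 0 m)"
    (is "_ = ?R")
proof (rule eq_matI)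
  fix a c assume "a < dim_row ?R" and "c < dim_col ?R"
  then have a: "a < n" and c: "c < m * i + m" using A B by auto
  then have "reach_mat m A B (Suc i) $$ (a, c) = (A ^\<^sub>m (i - c div m) * B) $$ (a, c mod m)"
    using A by (simp add: reach_mat_index)
  also have "\<dots> = ?R $$ (a, c)"
  proof (cases "c < m * i")
    case True
    then have "c div m < i" by (simp add: less_mult_imp_div_less mult.commute)
    then have "A ^\<^sub>m (i - c div m) = A * A ^\<^sub>m (i - 1 - c div m)"
      using pow_mat_Suc_left[OF A, of "i - 1 - c div m"] by (simp add: Suc_diff_Suc)
    then show ?thesis
      using True a c A B mult_reach_mat_index[OF A A B a True]
      by (simp add: assoc_mult_mat[of A n n _ n B m])
  next
    case False
    then show ?thesis
      using a c A B div_mod_last_block[of m i c] by simp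
  qed
  finally show "reach_mat m A B (Suc i) $$ (a, c) = ?R $$ (a, c)" .
qed (use A B in auto)

lemma obs_mat_Suc:
  assumes A: "A \<in> carrier_mat n n" and C: "C \<in> carrier_mat p n"
  shows "obs_mat p A C (Suc i) = obs_mat p A C i @\<^sub>r (C * A ^\<^sub>m i)"
proof (rule eq_matI)
  fix r j assume "r < dim_row (obs_mat p A C i @\<^sub>r (C * A ^\<^sub>m i))"
    and "j < dim_col (obs_mat p A C i @\<^sub>r (C * A ^\<^sub>m i))"
  then have r: "r < p * i + p" and j: "j < n" using A C by (auto simp: append_rows_def)
  then show "obs_mat p A C (Suc i) $$ (r, j) = (obs_mat p A C i @\<^sub>r (C * A ^\<^sub>m i)) $$ (r, j)"
    using A C div_mod_last_block[of p i r] by (auto simp: obs_mat_index append_rows_def)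
qed (use A C in \<open>auto simp: append_rows_def\<close>)

lemma toep_mat_Suc:
  assumes A: "A \<in> carrier_mat n n" and B: "B \<in> carrier_mat n m" and C: "C \<in> carrier_mat p n"
  shows "toep_mat p m A B C (Suc i) =
    four_block_mat (toep_mat p m A B C i) (0\<^sub>m (p * i) m) (C * reach_mat m A B i) (0\<^sub>m p m)"
    (is "_ = ?T")
proof (rule eq_matI)
  fix r c assume "r < dim_row ?T" "c < dim_col ?T"
  then have r: "r < p * i + p" and c: "c < m * i + m" using A C by auto
  show "toep_mat p m A B C (Suc i) $$ (r, c) = ?T $$ (r, c)"
  proof (cases "r < p * i"; cases "c < m * i")
    assume "r < p * i" "c < m * i"
    then show ?thesis using r c by (simp add: toep_mat_index)
  next
    assume "r < p * i" "\<not> c < m * i"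
    moreover have "r div p < i" using \<open>r < p * i\<close> by (simp add: less_mult_imp_div_less mult.commute)
    ultimately show ?thesis using r c div_mod_last_block[of m i c] by (simp add: toep_mat_index)
  next
    assume "\<not> r < p * i" "c < m * i"
    moreover have "c div m < i" using \<open>c < m * i\<close> by (simp add: less_mult_imp_div_less mult.commute)
    ultimately show ?thesis
      using r c A B C div_mod_last_block[of p i r] mult_reach_mat_index[OF C A B, of "r - p * i" c i]
      by (simp add: toep_mat_index diff_commute)
  next
    assume "\<not> r < p * i" "\<not> c < m * i"
    then show ?thesis using r c div_mod_last_block[of p i r] div_mod_last_block[of m i c]
      by (simp add: toep_mat_index)
  qed
qed (use A C in auto)

lemma four_block_mat_zero_rows_mult_vec:
  assumes "X \<in> carrier_mat k a" "Y \<in> carrier_mat k b" "v \<in> carrier_vec a" "w \<in> carrier_vec b"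
  shows "four_block_mat X Y (0\<^sub>m 0 a) (0\<^sub>m 0 b) *\<^sub>v (v @\<^sub>v w) = X *\<^sub>v v + Y *\<^sub>v w"
  using four_block_mat_mult_vec[OF assms(1,2) zero_carrier_mat zero_carrier_mat assms(3,4)] assms
  by (auto intro!: eq_vecI)

lemma mult_four_block_mat_zero_rows:
  assumes "M \<in> carrier_mat k n" "X \<in> carrier_mat n a" "Y \<in> carrier_mat n b"
  shows "M * four_block_mat X Y (0\<^sub>m 0 a) (0\<^sub>m 0 b) = four_block_mat (M * X) (M * Y) (0\<^sub>m 0 a) (0\<^sub>m 0 b)"
  using assms by (auto intro!: eq_matI simp: scalar_prod_def)

definition state_recon_mat ::
    "nat \<Rightarrow> nat \<Rightarrow> real mat \<Rightarrow> real mat \<Rightarrow> real mat \<Rightarrow> real mat \<Rightarrow> nat \<Rightarrow> real mat" where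
  "state_recon_mat p m A B C OL l = four_block_mat (A ^\<^sub>m l * OL)
     (reach_mat m A B l - A ^\<^sub>m l * OL * toep_mat p m A B C l) (0\<^sub>m 0 (p * l)) (0\<^sub>m 0 (m * l))"

lemma state_recon_mat_carrier:
  assumes "A \<in> carrier_mat n n" "OL \<in> carrier_mat n (p * l)"
  shows "state_recon_mat p m A B C OL l \<in> carrier_mat n (p * l + m * l)"
  using four_block_carrier_mat[OF mult_carrier_mat[OF pow_carrier_mat[OF assms(1)] assms(2)],
      of "0\<^sub>m 0 (m * l)" 0 "m * l"]
  unfolding state_recon_mat_def by simp

lemma Z_mat_eq_mult_state_recon_mat:
  assumes A: "A \<in> carrier_mat n n" and B: "B \<in> carrier_mat n m" and C: "C \<in> carrier_mat p n"
    and OL: "OL \<in> carrier_mat n (p * l)"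
  shows "Z_mat p m A B C OL l = C * state_recon_mat p m A B C OL l"
proof -
  have AOL: "A ^\<^sub>m l * OL \<in> carrier_mat n (p * l)"
    by (rule mult_carrier_mat[OF pow_carrier_mat[OF A] OL])
  have CAOL: "C * (A ^\<^sub>m l * OL) = C * A ^\<^sub>m l * OL"
    by (rule assoc_mult_mat[symmetric, OF C pow_carrier_mat[OF A] OL])
  have "C * (reach_mat m A B l - A ^\<^sub>m l * OL * toep_mat p m A B C l) =
      C * reach_mat m A B l - C * (A ^\<^sub>m l * OL * toep_mat p m A B C l)"
    by (rule mult_minus_distrib_mat[OF C reach_mat_carrier[OF A]
          mult_carrier_mat[OF AOL toep_mat_carrier]])
  also have "C * (A ^\<^sub>m l * OL * toep_mat p m A B C l) = C * A ^\<^sub>m l * OL * toep_mat p m A B C l"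
    unfolding CAOL[symmetric] by (rule assoc_mult_mat[symmetric, OF C AOL toep_mat_carrier])
  finally have "C * (reach_mat m A B l - A ^\<^sub>m l * OL * toep_mat p m A B C l) =
      C * reach_mat m A B l - C * A ^\<^sub>m l * OL * toep_mat p m A B C l" .
  moreover have "reach_mat m A B l - A ^\<^sub>m l * OL * toep_mat p m A B C l \<in> carrier_mat n (m * l)"
    by (rule minus_carrier_mat[OF mult_carrier_mat[OF AOL toep_mat_carrier]])
  ultimately show ?thesis
    unfolding Z_mat_def state_recon_mat_def by (simp add: mult_four_block_mat_zero_rows[OF C AOL] CAOL)
qed

lemma Z_mat_carrier:
  assumes "A \<in> carrier_mat n n" "B \<in> carrier_mat n m" "C \<in> carrier_mat p n" "OL \<in> carrier_mat n (p * l)"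
  shows "Z_mat p m A B C OL l \<in> carrier_mat p (p * l + m * l)"
  unfolding Z_mat_eq_mult_state_recon_mat[OF assms]
  by (rule mult_carrier_mat[OF assms(3) state_recon_mat_carrier[OF assms(1,4)]])

locale lti_trajectory =
  fixes A B :: "real mat" and x u :: "nat \<Rightarrow> real vec" and n m :: nat
  assumes A: "A \<in> carrier_mat n n" and B: "B \<in> carrier_mat n m"
    and x_carrier [simp]: "\<And>k. x k \<in> carrier_vec n"
    and u_carrier [simp]: "\<And>k. u k \<in> carrier_vec m"
    and x_Suc: "\<And>k. x (Suc k) = A *\<^sub>v x k + B *\<^sub>v u k"
begin

lemma state_eq_reach_mat: "x (s + i) = A ^\<^sub>m i *\<^sub>v x s + reach_mat m A B i *\<^sub>v window m u s i"
proof (induction i)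
  case 0
  show ?case using A by (auto intro!: eq_vecI simp: scalar_prod_def)
next
  case (Suc i)
  have Ai: "A ^\<^sub>m i *\<^sub>v x s \<in> carrier_vec n" "reach_mat m A B i *\<^sub>v window m u s i \<in> carrier_vec n"
    using A by (auto intro!: mult_mat_vec_carrier)
  have "x (s + Suc i) = A *\<^sub>v (A ^\<^sub>m i *\<^sub>v x s + reach_mat m A B i *\<^sub>v window m u s i) + B *\<^sub>v u (s + i)"
    using x_Suc[of "s + i"] Suc by simp
  also have "\<dots> = A ^\<^sub>m Suc i *\<^sub>v x s + ((A * reach_mat m A B i) *\<^sub>v window m u s i + B *\<^sub>v u (s + i))"
  proof -
    have "A ^\<^sub>m Suc i *\<^sub>v x s = A *\<^sub>v (A ^\<^sub>m i *\<^sub>v x s)"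
      unfolding pow_mat_Suc_left[OF A] by (rule assoc_mult_mat_vec[OF A pow_carrier_mat[OF A] x_carrier])
    moreover have "(A * reach_mat m A B i) *\<^sub>v window m u s i =
        A *\<^sub>v (reach_mat m A B i *\<^sub>v window m u s i)"
      by (rule assoc_mult_mat_vec[OF A reach_mat_carrier[OF A] window_carrier])
    ultimately show ?thesis
      using A B Ai by (simp add: mult_add_distrib_mat_vec[OF A] assoc_add_vec[of _ n])
  qed
  also have "(A * reach_mat m A B i) *\<^sub>v window m u s i + B *\<^sub>v u (s + i) =
      reach_mat m A B (Suc i) *\<^sub>v window m u s (Suc i)"
    using A B by (simp add: reach_mat_Suc window_Suc four_block_mat_zero_rows_mult_vec[of _ n _ _ m])
  finally show ?case .
qed

lemma output_window_eq:
  assumes C: "C \<in> carrier_mat p n"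
  shows "window p (\<lambda>k. C *\<^sub>v x k) s i =
    obs_mat p A C i *\<^sub>v x s + toep_mat p m A B C i *\<^sub>v window m u s i"
proof (induction i)
  case 0
  show ?case using A by (auto intro!: eq_vecI)
next
  case (Suc i)
  have "A ^\<^sub>m i *\<^sub>v x s \<in> carrier_vec n" "reach_mat m A B i *\<^sub>v window m u s i \<in> carrier_vec n"
    using A by (auto intro!: mult_mat_vec_carrier)
  then have "C *\<^sub>v x (s + i) = (C * A ^\<^sub>m i) *\<^sub>v x s + (C * reach_mat m A B i) *\<^sub>v window m u s i"
    using A C
    by (simp add: state_eq_reach_mat mult_add_distrib_mat_vec[OF C]
        assoc_mult_mat_vec[OF C pow_carrier_mat[OF A]] assoc_mult_mat_vec[OF C reach_mat_carrier[OF A]])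
  moreover have "obs_mat p A C (Suc i) *\<^sub>v x s = (obs_mat p A C i *\<^sub>v x s) @\<^sub>v ((C * A ^\<^sub>m i) *\<^sub>v x s)"
    unfolding obs_mat_Suc[OF A C]
    by (rule mat_mult_append[OF obs_mat_carrier[OF A] mult_carrier_mat[OF C pow_carrier_mat[OF A]]
          x_carrier])
  moreover have "toep_mat p m A B C (Suc i) *\<^sub>v window m u s (Suc i) =
      (toep_mat p m A B C i *\<^sub>v window m u s i + 0\<^sub>m (p * i) m *\<^sub>v u (s + i)) @\<^sub>v
      ((C * reach_mat m A B i) *\<^sub>v window m u s i + 0\<^sub>m p m *\<^sub>v u (s + i))"
    unfolding toep_mat_Suc[OF A B C] window_Suc[OF u_carrier]
    by (rule four_block_mat_mult_vec[OF toep_mat_carrier zero_carrier_mat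
          mult_carrier_mat[OF C reach_mat_carrier[OF A]] zero_carrier_mat window_carrier u_carrier])
  ultimately show ?case
    using A C Suc window_Suc[of "\<lambda>k. C *\<^sub>v x k", OF mult_mat_vec_carrier[OF C x_carrier]]
    by (auto intro!: eq_vecI)
qed

lemma state_eq_state_recon_mat:
  assumes C: "C \<in> carrier_mat p n" and OL: "OL \<in> carrier_mat n (p * l)"
    and left_inverse: "OL * obs_mat p A C l = 1\<^sub>m n"
  shows "x (s + l) =
    state_recon_mat p m A B C OL l *\<^sub>v (window p (\<lambda>k. C *\<^sub>v x k) s l @\<^sub>v window m u s l)"
proof -
  define P where "P = A ^\<^sub>m l * OL"
  define W where "W = window m u s l"
  have P: "P \<in> carrier_mat n (p * l)"
    unfolding P_def by (rule mult_carrier_mat[OF pow_carrier_mat[OF A] OL])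
  have W: "W \<in> carrier_vec (m * l)" by (simp add: W_def)
  have PT: "P * toep_mat p m A B C l \<in> carrier_mat n (m * l)"
    by (rule mult_carrier_mat[OF P toep_mat_carrier])
  have "P *\<^sub>v (obs_mat p A C l *\<^sub>v x s) = (P * obs_mat p A C l) *\<^sub>v x s"
    by (rule assoc_mult_mat_vec[symmetric, OF P obs_mat_carrier[OF A] x_carrier])
  also have "P * obs_mat p A C l = A ^\<^sub>m l"
    unfolding P_def assoc_mult_mat[OF pow_carrier_mat[OF A] OL obs_mat_carrier[OF A]] left_inverse
    using A by simp
  finally have "P *\<^sub>v (obs_mat p A C l *\<^sub>v x s) = A ^\<^sub>m l *\<^sub>v x s" .
  then have "P *\<^sub>v window p (\<lambda>k. C *\<^sub>v x k) s l = A ^\<^sub>m l *\<^sub>v x s + (P * toep_mat p m A B C l) *\<^sub>v W"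
    using A P W
    by (simp add: output_window_eq[OF C] W_def assoc_mult_mat_vec[OF P toep_mat_carrier window_carrier]
        mult_add_distrib_mat_vec[OF P mult_mat_vec_carrier[OF obs_mat_carrier[OF A] x_carrier]
          mult_mat_vec_carrier[OF toep_mat_carrier window_carrier]])
  moreover have "(reach_mat m A B l - P * toep_mat p m A B C l) *\<^sub>v W =
      reach_mat m A B l *\<^sub>v W - (P * toep_mat p m A B C l) *\<^sub>v W"
    using A PT W by (intro minus_mult_distrib_mat_vec) auto
  moreover have "x (s + l) = A ^\<^sub>m l *\<^sub>v x s + reach_mat m A B l *\<^sub>v W"
    unfolding W_def by (rule state_eq_reach_mat)
  moreover have "state_recon_mat p m A B C OL l *\<^sub>v (window p (\<lambda>k. C *\<^sub>v x k) s l @\<^sub>v W) =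
      P *\<^sub>v window p (\<lambda>k. C *\<^sub>v x k) s l + (reach_mat m A B l - P * toep_mat p m A B C l) *\<^sub>v W"
    unfolding state_recon_mat_def P_def[symmetric]
    by (rule four_block_mat_zero_rows_mult_vec[OF P minus_carrier_mat[OF PT] window_carrier W])
  ultimately show ?thesis
    unfolding W_def[symmetric] using A P W PT by (auto intro!: eq_vecI)
qed

end

section \<open>The observer as a shift register\<close>

lemma mult_mat_vec_index_unit_row:
  fixes M :: "'a :: semiring_1 mat"
  assumes "M \<in> carrier_mat a b" "v \<in> carrier_vec b" "i < a"
    and "\<And>j. j < b \<Longrightarrow> M $$ (i, j) = (if P \<and> j = t then 1 else 0)"
  shows "(M *\<^sub>v v) $ i = (if P \<and> t < b then v $ t else 0)"
proof -
  have "(M *\<^sub>v v) $ i = (\<Sum>j<b. if P \<and> j = t then v $ j else 0)"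
    using assms by (auto simp: scalar_prod_def atLeast0LessThan intro!: sum.cong)
  then show ?thesis by (cases P) simp_all
qed

lemma F_mat_carrier [simp]: "F_mat p m l \<in> carrier_mat (p * l + m * l) (p * l + m * l)"
  unfolding F_mat_def shift_mat_def by (rule four_block_carrier_mat) auto

lemma L_mat_carrier [simp]: "L_mat p m l \<in> carrier_mat (p * l + m * l) p"
  and Bl_mat_carrier [simp]: "Bl_mat p m l \<in> carrier_mat (p * l + m * l) m"
  by (simp_all add: L_mat_def Bl_mat_def)

lemma observer_update_index:
  assumes h: "h \<in> carrier_vec (p * l + m * l)" and y: "y \<in> carrier_vec p" and u: "u \<in> carrier_vec m"
    and r: "r < p * l + m * l"
  shows "(F_mat p m l *\<^sub>v h + L_mat p m l *\<^sub>v y + Bl_mat p m l *\<^sub>v u) $ r =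
    (if r < p * l then (if r + p < p * l then h $ (r + p) else y $ (r + p - p * l))
     else if r + m < p * l + m * l then h $ (r + m) else u $ (r + m - (p * l + m * l)))"
proof -
  have F: "(F_mat p m l *\<^sub>v h) $ r =
      (if (r < p * l \<longrightarrow> r + p < p * l) \<and> (if r < p * l then r + p else r + m) < p * l + m * l
       then h $ (if r < p * l then r + p else r + m) else 0)"
    by (rule mult_mat_vec_index_unit_row[OF _ h r]) (use r in \<open>auto simp: F_mat_def shift_mat_def\<close>)
  have L: "(L_mat p m l *\<^sub>v y) $ r =
      (if p * l \<le> r + p \<and> r + p - p * l < p then y $ (r + p - p * l) else 0)"
    by (rule mult_mat_vec_index_unit_row[OF _ y r]) (use r in \<open>auto simp: L_mat_def\<close>)
  have Bl: "(Bl_mat p m l *\<^sub>v u) $ r =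
      (if p * l + m * l \<le> r + m \<and> r + m - (p * l + m * l) < m then u $ (r + m - (p * l + m * l)) else 0)"
    by (rule mult_mat_vec_index_unit_row[OF _ u r]) (use r in \<open>auto simp: Bl_mat_def\<close>)
  have "r < p * l \<Longrightarrow> r + m < p * l + m * l"
    by (cases l) auto
  then show ?thesis
    using F L Bl r carrier_matD[OF F_mat_carrier] carrier_matD[OF L_mat_carrier]
      carrier_matD[OF Bl_mat_carrier]
    by auto
qed

lemma shift_register_index:
  fixes h w :: "nat \<Rightarrow> 'a vec"
  assumes step: "\<And>k r. r < q * l \<Longrightarrow>
      h (Suc k) $ (d + r) = (if r + q < q * l then h k $ (d + r + q) else w k $ (r + q - q * l))"
  shows "r < q * l \<Longrightarrow> l \<le> k + r div q \<Longrightarrow> h k $ (d + r) = w (k + r div q - l) $ (r mod q)"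
proof (induction k arbitrary: r)
  case 0
  then show ?case using less_mult_imp_div_less[of r l q] by (simp add: mult.commute)
next
  case (Suc k)
  then have "q > 0" by (cases q) auto
  show ?case
  proof (cases "r + q < q * l")
    case True
    then have "h k $ (d + (r + q)) = w (k + (r + q) div q - l) $ ((r + q) mod q)"
      using Suc \<open>q > 0\<close> by (intro Suc.IH) auto
    then show ?thesis
      using step[OF Suc.prems(1)] True \<open>q > 0\<close> by (simp add: add.assoc)
  next
    case False
    then have "q * (l - 1) \<le> r" "r < q * (l - 1) + q"
      using Suc.prems(1) by (cases l; auto)+
    then show ?thesis
      using step[OF Suc.prems(1)] False div_mod_last_block[of q "l - 1" r] Suc.prems(1)
      by (cases l) (auto simp: algebra_simps)
  qed
qed

lemma observer_state_eq_window:
  fixes \<chi> y u :: "nat \<Rightarrow> real vec"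
  assumes \<chi>: "\<And>k. \<chi> k \<in> carrier_vec (p * l + m * l)"
    and y: "\<And>k. y k \<in> carrier_vec p" and u: "\<And>k. u k \<in> carrier_vec m"
    and \<chi>_Suc: "\<And>k. \<chi> (Suc k) = F_mat p m l *\<^sub>v \<chi> k + L_mat p m l *\<^sub>v y k + Bl_mat p m l *\<^sub>v u k"
    and "l \<le> k"
  shows "\<chi> k = window p y (k - l) l @\<^sub>v window m u (k - l) l"
proof (rule eq_vecI)
  have step: "\<chi> (Suc k) $ r =
      (if r < p * l then (if r + p < p * l then \<chi> k $ (r + p) else y k $ (r + p - p * l))
       else if r + m < p * l + m * l then \<chi> k $ (r + m) else u k $ (r + m - (p * l + m * l)))"
    if "r < p * l + m * l" for k r
    unfolding \<chi>_Suc using observer_update_index[OF \<chi> y u that] .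
  fix i assume "i < dim_vec (window p y (k - l) l @\<^sub>v window m u (k - l) l)"
  then have i: "i < p * l + m * l" by simp
  show "\<chi> k $ i = (window p y (k - l) l @\<^sub>v window m u (k - l) l) $ i"
  proof (cases "i < p * l")
    case True
    have "\<chi> k $ (0 + i) = y (k + i div p - l) $ (i mod p)"
      by (rule shift_register_index[of p l \<chi> 0 y]) (use step True \<open>l \<le> k\<close> in auto)
    then show ?thesis using True \<open>l \<le> k\<close> by (simp add: window_def)
  next
    case False
    define r where "r = i - p * l"
    have r: "r < m * l" "i = p * l + r" using False i by (auto simp: r_def)
    have "\<chi> k $ (p * l + r) = u (k + r div m - l) $ (r mod m)"
      by (rule shift_register_index[of m l \<chi> "p * l" u]) (use step r \<open>l \<le> k\<close> in \<open>auto simp: add.assoc\<close>)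
    then show ?thesis using r \<open>l \<le> k\<close> by (simp add: window_def)
  qed
qed (use \<chi> in simp)

section \<open>The closed loop\<close>

lemma mult_mat_vec_zero: "M \<in> carrier_mat a b \<Longrightarrow> M *\<^sub>v 0\<^sub>v b = (0\<^sub>v a :: 'a :: semiring_0 vec)"
  by (auto intro!: eq_vecI simp: scalar_prod_def)

lemma closed_loop_carrier:
  assumes "A \<in> carrier_mat n n" "B \<in> carrier_mat n m" "C \<in> carrier_mat p n"
    "F \<in> carrier_mat N N" "L \<in> carrier_mat N p" "Bl \<in> carrier_mat N m" "K \<in> carrier_mat m N"
    and "z \<in> carrier_vec n \<times> carrier_vec N"
  shows "closed_loop A B C F L Bl K z \<in> carrier_vec n \<times> carrier_vec N"
  using assms by (auto simp: closed_loop_def Let_def)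

lemma closed_loop_funpow_carrier:
  assumes "A \<in> carrier_mat n n" "B \<in> carrier_mat n m" "C \<in> carrier_mat p n"
    "F \<in> carrier_mat N N" "L \<in> carrier_mat N p" "Bl \<in> carrier_mat N m" "K \<in> carrier_mat m N"
    and "z \<in> carrier_vec n \<times> carrier_vec N"
  shows "(closed_loop A B C F L Bl K ^^ k) z \<in> carrier_vec n \<times> carrier_vec N"
  by (induction k) (use assms in \<open>auto intro: closed_loop_carrier[OF assms(1-7)]\<close>)

lemma closed_loop_step_bound:
  assumes A: "A \<in> carrier_mat n n" and B: "B \<in> carrier_mat n m" and C: "C \<in> carrier_mat p n"
    and F: "F \<in> carrier_mat N N" and L: "L \<in> carrier_mat N p" and Bl: "Bl \<in> carrier_mat N m"
    and K: "K \<in> carrier_mat m N"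
  obtains c where "\<And>z. z \<in> carrier_vec n \<times> carrier_vec N \<Longrightarrow>
    pair_norm (closed_loop A B C F L Bl K z) \<le> c * pair_norm z"
proof
  let ?e = abs_entry_sum
  have bound: "vnorm (M *\<^sub>v v) \<le> ?e M * Q" if "v \<in> carrier_vec (dim_col M)" "vnorm v \<le> Q" for M v Q
    using vnorm_mult_mat_vec_le[OF that(1)] mult_left_mono[OF that(2) abs_entry_sum_nonneg[of M]]
    by linarith
  fix z :: "real vec \<times> real vec" assume "z \<in> carrier_vec n \<times> carrier_vec N"
  then obtain x h where z: "z = (x, h)" and x: "x \<in> carrier_vec n" and h: "h \<in> carrier_vec N" by auto
  define P where "P = pair_norm z"
  have xP: "vnorm x \<le> P" and hP: "vnorm h \<le> P"
    using vnorm_fst_le_pair_norm[of z] vnorm_snd_le_pair_norm[of z] by (simp_all add: P_def z)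
  have KhP: "vnorm (K *\<^sub>v h) \<le> ?e K * P" and CxP: "vnorm (C *\<^sub>v x) \<le> ?e C * P"
    using bound x h xP hP K C by simp_all
  have "vnorm (A *\<^sub>v x + B *\<^sub>v (K *\<^sub>v h)) \<le> vnorm (A *\<^sub>v x) + vnorm (B *\<^sub>v (K *\<^sub>v h))"
    using A B K x h by (intro vnorm_add_le[of _ n]) auto
  also have "\<dots> \<le> ?e A * P + ?e B * (?e K * P)"
    using bound[of x A P] bound[of "K *\<^sub>v h" B] A B K x h xP KhP by (intro add_mono) auto
  finally have fst_bound: "vnorm (A *\<^sub>v x + B *\<^sub>v (K *\<^sub>v h)) \<le> ?e A * P + ?e B * (?e K * P)" .
  have "vnorm (F *\<^sub>v h + L *\<^sub>v (C *\<^sub>v x) + Bl *\<^sub>v (K *\<^sub>v h))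
      \<le> vnorm (F *\<^sub>v h) + vnorm (L *\<^sub>v (C *\<^sub>v x)) + vnorm (Bl *\<^sub>v (K *\<^sub>v h))"
    using F L Bl C K x h vnorm_add_le[of "F *\<^sub>v h" N "L *\<^sub>v (C *\<^sub>v x)"]
      vnorm_add_le[of "F *\<^sub>v h + L *\<^sub>v (C *\<^sub>v x)" N "Bl *\<^sub>v (K *\<^sub>v h)"] by auto
  also have "\<dots> \<le> ?e F * P + ?e L * (?e C * P) + ?e Bl * (?e K * P)"
    using bound[of h F P] bound[of "C *\<^sub>v x" L] bound[of "K *\<^sub>v h" Bl] F L Bl C K x h hP CxP KhP
    by (intro add_mono) auto
  finally have snd_bound: "vnorm (F *\<^sub>v h + L *\<^sub>v (C *\<^sub>v x) + Bl *\<^sub>v (K *\<^sub>v h))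
      \<le> ?e F * P + ?e L * (?e C * P) + ?e Bl * (?e K * P)" .
  show "pair_norm (closed_loop A B C F L Bl K z)
      \<le> (?e A + ?e B * ?e K + ?e F + ?e L * ?e C + ?e Bl * ?e K) * pair_norm z"
    using pair_norm_le_add[of "closed_loop A B C F L Bl K z"] fst_bound snd_bound
    unfolding P_def by (simp add: closed_loop_def Let_def z algebra_simps)
qed

locale observer_loop =
  fixes A B C OL K :: "real mat" and n m p l :: nat
  assumes A: "A \<in> carrier_mat n n" and B: "B \<in> carrier_mat n m" and C: "C \<in> carrier_mat p n"
    and OL: "OL \<in> carrier_mat n (p * l)" and left_inverse: "OL * obs_mat p A C l = 1\<^sub>m n"
    and K: "K \<in> carrier_mat m (p * l + m * l)"
begin

abbreviation "N \<equiv> p * l + m * l"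
abbreviation "loop \<equiv> closed_loop A B C (F_mat p m l) (L_mat p m l) (Bl_mat p m l) K"
abbreviation "M \<equiv> F_mat p m l + L_mat p m l * Z_mat p m A B C OL l + Bl_mat p m l * K"
abbreviation "G \<equiv> state_recon_mat p m A B C OL l"

lemma G_carrier: "G \<in> carrier_mat n N"
  by (rule state_recon_mat_carrier[OF A OL])

lemma M_carrier: "M \<in> carrier_mat N N"
  using Z_mat_carrier[OF A B C OL] K by (intro add_carrier_mat mult_carrier_mat) auto

lemma loop_funpow_carrier:
  "z \<in> carrier_vec n \<times> carrier_vec N \<Longrightarrow> (loop ^^ k) z \<in> carrier_vec n \<times> carrier_vec N"
  by (rule closed_loop_funpow_carrier[OF A B C F_mat_carrier L_mat_carrier Bl_mat_carrier K])

lemma fst_loop: "fst (loop w) = A *\<^sub>v fst w + B *\<^sub>v (K *\<^sub>v snd w)"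
  and snd_loop: "snd (loop w) =
    F_mat p m l *\<^sub>v snd w + L_mat p m l *\<^sub>v (C *\<^sub>v fst w) + Bl_mat p m l *\<^sub>v (K *\<^sub>v snd w)"
  by (simp_all add: closed_loop_def Let_def split: prod.split)

lemma loop_state_eq_state_recon_mat:
  assumes z: "z \<in> carrier_vec n \<times> carrier_vec N"
  shows "fst ((loop ^^ (k + l)) z) = G *\<^sub>v snd ((loop ^^ (k + l)) z)"
proof -
  define x where "x j = fst ((loop ^^ j) z)" for j
  define \<chi> where "\<chi> j = snd ((loop ^^ j) z)" for j
  have x: "x j \<in> carrier_vec n" and \<chi>: "\<chi> j \<in> carrier_vec N" for j
    using loop_funpow_carrier[OF z, of j] by (auto simp: x_def \<chi>_def mem_Times_iff)
  interpret lti_trajectory A B x "\<lambda>j. K *\<^sub>v \<chi> j" n m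
    using A B x \<chi> K by unfold_locales (auto simp: x_def \<chi>_def fst_loop snd_loop)
  have "\<chi> (k + l) = window p (\<lambda>j. C *\<^sub>v x j) k l @\<^sub>v window m (\<lambda>j. K *\<^sub>v \<chi> j) k l"
    using observer_state_eq_window[of \<chi> p l m "\<lambda>j. C *\<^sub>v x j" "\<lambda>j. K *\<^sub>v \<chi> j" "k + l"] \<chi> x C K
    by (simp add: x_def \<chi>_def fst_loop snd_loop)
  then show ?thesis
    using state_eq_state_recon_mat[OF C OL left_inverse, of k] by (simp add: x_def \<chi>_def)
qed

lemma loop_observer_Suc:
  assumes z: "z \<in> carrier_vec n \<times> carrier_vec N"
  shows "snd ((loop ^^ Suc (k + l)) z) = M *\<^sub>v snd ((loop ^^ (k + l)) z)"
proof -
  define \<chi> where "\<chi> = snd ((loop ^^ (k + l)) z)"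
  have \<chi>: "\<chi> \<in> carrier_vec N"
    using loop_funpow_carrier[OF z] by (auto simp: \<chi>_def mem_Times_iff)
  have Z: "Z_mat p m A B C OL l \<in> carrier_mat p N" by (rule Z_mat_carrier[OF A B C OL])
  have LZ: "L_mat p m l * Z_mat p m A B C OL l \<in> carrier_mat N N"
    and BlK: "Bl_mat p m l * K \<in> carrier_mat N N"
    by (rule mult_carrier_mat[OF L_mat_carrier Z], rule mult_carrier_mat[OF Bl_mat_carrier K])
  have "C *\<^sub>v fst ((loop ^^ (k + l)) z) = Z_mat p m A B C OL l *\<^sub>v \<chi>"
    unfolding loop_state_eq_state_recon_mat[OF z] Z_mat_eq_mult_state_recon_mat[OF A B C OL] \<chi>_def
    by (rule assoc_mult_mat_vec[symmetric, OF C G_carrier \<chi>[unfolded \<chi>_def]])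
  moreover have "M *\<^sub>v \<chi> = F_mat p m l *\<^sub>v \<chi> + L_mat p m l *\<^sub>v (Z_mat p m A B C OL l *\<^sub>v \<chi>)
      + Bl_mat p m l *\<^sub>v (K *\<^sub>v \<chi>)"
    unfolding add_mult_distrib_mat_vec[OF add_carrier_mat[OF LZ] BlK \<chi>]
      add_mult_distrib_mat_vec[OF F_mat_carrier LZ \<chi>] assoc_mult_mat_vec[OF L_mat_carrier Z \<chi>]
      assoc_mult_mat_vec[OF Bl_mat_carrier K \<chi>] ..
  ultimately show ?thesis
    by (simp add: fst_loop snd_loop \<chi>_def)
qed

lemma loop_observer_pow:
  assumes z: "z \<in> carrier_vec n \<times> carrier_vec N"
  shows "snd ((loop ^^ (k + l)) z) = M ^\<^sub>m k *\<^sub>v snd ((loop ^^ l) z)"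
proof (induction k)
  case (Suc k)
  have \<chi>: "snd ((loop ^^ l) z) \<in> carrier_vec N"
    using loop_funpow_carrier[OF z] by (auto simp: mem_Times_iff)
  have "snd ((loop ^^ (Suc k + l)) z) = M *\<^sub>v (M ^\<^sub>m k *\<^sub>v snd ((loop ^^ l) z))"
    using loop_observer_Suc[OF z, of k] Suc.IH by simp
  also have "\<dots> = (M * M ^\<^sub>m k) *\<^sub>v snd ((loop ^^ l) z)"
    by (rule assoc_mult_mat_vec[symmetric, OF M_carrier pow_carrier_mat[OF M_carrier] \<chi>])
  finally show ?case
    unfolding pow_mat_Suc_left[OF M_carrier] .
qed (use M_carrier loop_funpow_carrier[OF z] in \<open>auto simp: mem_Times_iff\<close>)

lemma loop_tail_bound:
  assumes z: "z \<in> carrier_vec n \<times> carrier_vec N" and "0 \<le> d" "0 \<le> r"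
    and decay: "\<And>k v. v \<in> carrier_vec N \<Longrightarrow> vnorm (M ^\<^sub>m k *\<^sub>v v) \<le> d * r ^ k * vnorm v"
  shows "pair_norm ((loop ^^ (k + l)) z) \<le> (abs_entry_sum G + 1) * d * r ^ k * pair_norm ((loop ^^ l) z)"
proof -
  define \<chi> where "\<chi> = snd ((loop ^^ (k + l)) z)"
  have \<chi>: "\<chi> \<in> carrier_vec N" and \<chi>l: "snd ((loop ^^ l) z) \<in> carrier_vec N"
    using loop_funpow_carrier[OF z] by (auto simp: \<chi>_def mem_Times_iff)
  have "vnorm \<chi> \<le> d * r ^ k * vnorm (snd ((loop ^^ l) z))"
    unfolding \<chi>_def loop_observer_pow[OF z] by (rule decay[OF \<chi>l])
  also have "\<dots> \<le> d * r ^ k * pair_norm ((loop ^^ l) z)"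
    using \<open>0 \<le> d\<close> \<open>0 \<le> r\<close> by (intro mult_left_mono vnorm_snd_le_pair_norm) auto
  finally have \<chi>_decay: "vnorm \<chi> \<le> d * r ^ k * pair_norm ((loop ^^ l) z)" .
  have "pair_norm ((loop ^^ (k + l)) z) \<le> vnorm (G *\<^sub>v \<chi>) + vnorm \<chi>"
    using pair_norm_le_add[of "(loop ^^ (k + l)) z"] loop_state_eq_state_recon_mat[OF z, of k]
    by (simp add: \<chi>_def)
  also have "\<dots> \<le> (abs_entry_sum G + 1) * vnorm \<chi>"
    using vnorm_mult_mat_vec_le[of \<chi> G] \<chi> G_carrier by (simp add: algebra_simps)
  also have "\<dots> \<le> (abs_entry_sum G + 1) * (d * r ^ k * pair_norm ((loop ^^ l) z))"
    using \<chi>_decay abs_entry_sum_nonneg[of G] by (intro mult_left_mono) auto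
  finally show ?thesis by (simp add: ac_simps)
qed

lemma loop_gas:
  assumes "schur M"
  shows "gas loop (carrier_vec n \<times> carrier_vec N) pair_norm (0\<^sub>v n, 0\<^sub>v N)"
proof -
  obtain c where step: "\<And>z. z \<in> carrier_vec n \<times> carrier_vec N \<Longrightarrow> pair_norm (loop z) \<le> c * pair_norm z"
    using closed_loop_step_bound[OF A B C F_mat_carrier L_mat_carrier Bl_mat_carrier K] by metis
  obtain d r where "0 \<le> d" "0 \<le> r" "r < 1"
    and decay: "\<And>k v. v \<in> carrier_vec N \<Longrightarrow> vnorm (M ^\<^sub>m k *\<^sub>v v) \<le> d * r ^ k * vnorm v"
    using schur_pow_mat_mult_vec_decay[OF M_carrier assms] by (metis less_imp_le)
  have "loop (0\<^sub>v n, 0\<^sub>v N) = (0\<^sub>v n, 0\<^sub>v N)"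
    using mult_mat_vec_zero[OF A] mult_mat_vec_zero[OF B] mult_mat_vec_zero[OF C] mult_mat_vec_zero[OF K]
      mult_mat_vec_zero[OF F_mat_carrier] mult_mat_vec_zero[OF L_mat_carrier]
      mult_mat_vec_zero[OF Bl_mat_carrier]
    by (simp add: closed_loop_def)
  then show ?thesis
    using loop_funpow_carrier[of _ 1] step loop_tail_bound[OF _ \<open>0 \<le> d\<close> \<open>0 \<le> r\<close> decay]
      pair_norm_nonneg \<open>0 \<le> r\<close> \<open>r < 1\<close>
    by (intro gas_if_exponential_tail[where l = l and D = "(abs_entry_sum G + 1) * d"]) auto
qed

end

theorem lemma8:
  fixes A B C OL K :: "real mat" and n m p :: nat
  assumes "A \<in> carrier_mat n n" and "B \<in> carrier_mat n m" and "C \<in> carrier_mat p n"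
    and "observable p A C"
    and "OL \<in> carrier_mat n (p * obs_index p A C)"
    and "OL * obs_mat p A C (obs_index p A C) = 1\<^sub>m n"
    and "K \<in> carrier_mat m (p * obs_index p A C + m * obs_index p A C)"
    and "schur (F_mat p m (obs_index p A C)
               + L_mat p m (obs_index p A C) * Z_mat p m A B C OL (obs_index p A C)
               + Bl_mat p m (obs_index p A C) * K)"
  shows "gas (closed_loop A B C (F_mat p m (obs_index p A C)) (L_mat p m (obs_index p A C))
                (Bl_mat p m (obs_index p A C)) K)
             (carrier_vec n \<times> carrier_vec (p * obs_index p A C + m * obs_index p A C))
             pair_norm
             (0\<^sub>v n, 0\<^sub>v (p * obs_index p A C + m * obs_index p A C))"
proof -
  interpret observer_loop A B C OL K n m p "obs_index p A C"
    using assms by unfold_locales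
  show ?thesis
    using assms(8) by (rule loop_gas)
qed

end
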